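(* For $n\ge 4$, let $\Phi_n$ be the set of all graphs on $n$ vertices with non-negative integer weights on their edges such that every subgraph spanned by at least $4$ vertices has total weight at least $3$, and let $\phi_n$ be the minimum total weight among all graphs in $\Phi_n$. Then $$\phi_n=\left\lceil\tfrac{1}{3}n(n-2)\right\rceil.$$
   Context: The total weight of a (sub)graph is the sum of the weights of its edges; the subgraph spanned by a set of vertices consists of those vertices and all edges between them. *)

theory Defs
  imports Complex_Main
begin

text \<open>A weighted graph on the vertex set {0..<n}: a weight function w assigning to each
  unordered pair {i,j} (represented by i < j) a non-negative integer w i j
  (weight 0 = no edge). Values of w at pairs outside {0..<n} or with i >= j are irrelevant.\<close>

definition span_weight :: "(nat \<Rightarrow> nat \<Rightarrow> nat) \<Rightarrow> nat set \<Rightarrow> nat" where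
  "span_weight w S = (\<Sum>p \<in> {(i, j). i \<in> S \<and> j \<in> S \<and> i < j}. w (fst p) (snd p))"

definition Phi :: "nat \<Rightarrow> (nat \<Rightarrow> nat \<Rightarrow> nat) set" where
  "Phi n = {w. \<forall>S. S \<subseteq> {..<n} \<and> card S \<ge> 4 \<longrightarrow> span_weight w S \<ge> 3}"

definition phi :: "nat \<Rightarrow> nat" where
  "phi n = Inf {span_weight w {..<n} | w. w \<in> Phi n}"

end

theory Submission
  imports Defs
begin

(*
  Lower bound: let T be a triangle of minimum weight m. Every other vertex y sends weight
  at least 3 - m into T (the 4-set T + y) and at least m (the three triangles formed by y
  and an edge of T contain each edge between y and T twice). Deleting T therefore removes
  weight at least m + (n - 3) max(m, 3 - m) >= 2(n - 3) + 1, and induction in steps of 3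
  gives 3 phi(n) >= n(n - 2).

  Upper bound: a complete graph of edge weight 2 on about n/3 vertices next to a complete
  graph of edge weight 1 on the remaining vertices.
*)

definition edge_weight :: "(nat \<Rightarrow> nat \<Rightarrow> nat) \<Rightarrow> nat \<Rightarrow> nat \<Rightarrow> nat" where
  "edge_weight w x y = (if x < y then w x y else if y < x then w y x else 0)"

lemma edge_weight_commute: "edge_weight w x y = edge_weight w y x"
  unfolding edge_weight_def by simp

lemma span_weight_eq_double_sum:
  assumes "finite S"
  shows "span_weight w S = (\<Sum>i\<in>S. \<Sum>j\<in>S. if i < j then w i j else 0)"
proof -
  have "span_weight w S = (\<Sum>(i, j)\<in>S \<times> S. if i < j then w i j else 0)"
    unfolding span_weight_def using assms
    by (intro sum.mono_neutral_cong_left) (auto split: if_splits)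
  also have "\<dots> = (\<Sum>i\<in>S. \<Sum>j\<in>S. if i < j then w i j else 0)"
    by (simp add: sum.cartesian_product)
  finally show ?thesis .
qed

lemma span_weight_empty [simp]: "span_weight w {} = 0"
  unfolding span_weight_def by simp

lemma span_weight_insert:
  assumes "finite S" "x \<notin> S"
  shows "span_weight w (insert x S) = span_weight w S + (\<Sum>y\<in>S. edge_weight w x y)"
proof -
  have "edge_weight w x y = (if y < x then w y x else 0) + (if x < y then w x y else 0)" for y
    unfolding edge_weight_def by simp
  then show ?thesis
    using assms by (simp add: span_weight_eq_double_sum sum.distrib)
qed

lemma span_weight_Un:
  assumes "finite A" "finite B" "A \<inter> B = {}"
  shows "span_weight w (A \<union> B) =
    span_weight w A + span_weight w B + (\<Sum>x\<in>A. \<Sum>y\<in>B. edge_weight w x y)"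
  using assms
proof (induction A rule: finite_induct)
  case (insert x A)
  then have "span_weight w (insert x A \<union> B) =
      span_weight w (A \<union> B) + (\<Sum>y\<in>A. edge_weight w x y) + (\<Sum>y\<in>B. edge_weight w x y)"
    by (simp add: span_weight_insert sum.union_disjoint)
  with insert show ?case
    by (simp add: span_weight_insert)
qed simp

lemma span_weight_triangle:
  assumes "a \<noteq> b" "a \<noteq> c" "b \<noteq> c"
  shows "span_weight w {a, b, c} = edge_weight w a b + edge_weight w a c + edge_weight w b c"
  using assms by (simp add: span_weight_insert edge_weight_commute)

lemma span_weight_const:
  assumes "finite S" "\<And>x y. x \<in> S \<Longrightarrow> y \<in> S \<Longrightarrow> x \<noteq> y \<Longrightarrow> edge_weight w x y = c"
  shows "span_weight w S = c * (card S choose 2)"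
  using assms
proof (induction S rule: finite_induct)
  case (insert x S)
  then have "(\<Sum>y\<in>S. edge_weight w x y) = (\<Sum>y\<in>S. c)"
    by (intro sum.cong) auto
  moreover have "Suc (card S) choose 2 = card S + (card S choose 2)"
    by (simp add: numeral_2_eq_2)
  ultimately show ?case
    using insert by (simp add: span_weight_insert algebra_simps)
qed simp

lemma obtain_min_weight_triangle:
  assumes "finite S" "3 \<le> card S"
  obtains T where "T \<subseteq> S" "card T = 3"
    "\<And>T'. T' \<subseteq> S \<Longrightarrow> card T' = 3 \<Longrightarrow> span_weight w T \<le> span_weight w T'"
proof -
  obtain T0 where "T0 \<subseteq> S" "card T0 = 3"
    using obtain_subset_with_card_n[OF assms(2)] by blast
  then obtain T where "T \<subseteq> S \<and> card T = 3"
    and "\<forall>T'. T' \<subseteq> S \<and> card T' = 3 \<longrightarrow> span_weight w T \<le> span_weight w T'"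
    using ex_has_least_nat[of "\<lambda>T. T \<subseteq> S \<and> card T = 3" T0 "span_weight w"] by blast
  then show ?thesis
    using that by blast
qed

lemma triangle_le_link_weight:
  assumes "card T = 3" "y \<notin> T"
    and min: "\<And>x. x \<in> T \<Longrightarrow> span_weight w T \<le> span_weight w (insert y (T - {x}))"
  shows "span_weight w T \<le> (\<Sum>x\<in>T. edge_weight w y x)"
proof -
  obtain a b c where T: "T = {a, b, c}" and abc: "a \<noteq> b" "a \<noteq> c" "b \<noteq> c"
    using assms(1) by (auto simp: card_3_iff)
  have y: "y \<noteq> a" "y \<noteq> b" "y \<noteq> c"
    using assms(2) T by auto
  have "insert y (T - {a}) = {y, b, c}" "insert y (T - {b}) = {a, y, c}" "insert y (T - {c}) = {a, b, y}"
    using T abc by auto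
  then have "span_weight w T \<le> span_weight w {y, b, c}" "span_weight w T \<le> span_weight w {a, y, c}"
    "span_weight w T \<le> span_weight w {a, b, y}"
    using min T by (metis insertCI)+
  moreover have "span_weight w {y, b, c} = edge_weight w y b + edge_weight w y c + edge_weight w b c"
    "span_weight w {a, y, c} = edge_weight w y a + edge_weight w a c + edge_weight w y c"
    "span_weight w {a, b, y} = edge_weight w a b + edge_weight w y a + edge_weight w y b"
    using abc y by (simp_all add: span_weight_triangle edge_weight_commute[of w _ y])
  moreover have "span_weight w T = edge_weight w a b + edge_weight w a c + edge_weight w b c"
    "(\<Sum>x\<in>T. edge_weight w y x) = edge_weight w y a + edge_weight w y b + edge_weight w y c"
    using T abc by (simp_all add: span_weight_triangle)
  ultimately show ?thesis
    by linarith
qed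

text \<open>Here \<open>k\<close> is the number of vertices outside the minimal triangle, \<open>m\<close> its weight,
  \<open>C\<close> the weight between the triangle and the other vertices, and \<open>s\<close> the weight
  spanned by the other vertices.\<close>

lemma lower_bound_step:
  fixes k m s C :: nat
  assumes "1 \<le> k" "k * m \<le> C" "k * (3 - m) \<le> C"
    and "4 \<le> k \<Longrightarrow> k * (k - 2) \<le> 3 * s" and "k = 3 \<Longrightarrow> m \<le> s"
  shows "(k + 3) * (k + 1) \<le> 3 * (s + C + m)"
proof -
  have C_ge_2k: "2 * k \<le> C"
  proof (cases "2 \<le> m")
    case True
    then show ?thesis
      using assms(2) mult_le_mono2[of 2 m k] by linarith
  next
    case False
    then show ?thesis
      using assms(3) mult_le_mono2[of 2 "3 - m" k] by linarith
  qed
  have C_ge_3k: "3 * k \<le> C" if "m = 0"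
    using assms(3) that by (simp add: mult.commute)
  consider "k = 1" | "k = 2" | "k = 3" | "4 \<le> k"
    using assms(1) by linarith
  then show ?thesis
  proof cases
    case 4
    then obtain j where "k = j + 2"
      using le_Suc_ex[of 2 k] by (auto simp: add.commute)
    then have "(k + 3) * (k + 1) = k * (k - 2) + 6 * k + 3"
      by (simp add: algebra_simps)
    moreover have "m = 0 \<or> 1 \<le> m"
      by linarith
    ultimately show ?thesis
      using assms(4)[OF 4] C_ge_2k C_ge_3k 4 by auto
  qed (use assms(5) C_ge_2k C_ge_3k in \<open>(cases "m = 0"; simp)+\<close>)
qed

lemma span_weight_lower_bound:
  assumes "finite S" "4 \<le> card S" "\<And>T. T \<subseteq> S \<Longrightarrow> card T = 4 \<Longrightarrow> 3 \<le> span_weight w T"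
  shows "card S * (card S - 2) \<le> 3 * span_weight w S"
  using assms
proof (induction "card S" arbitrary: S rule: less_induct)
  case less
  have "3 \<le> card S"
    using less.prems(2) by linarith
  then obtain T where T: "T \<subseteq> S" "card T = 3"
    and T_min: "\<And>T'. T' \<subseteq> S \<Longrightarrow> card T' = 3 \<Longrightarrow> span_weight w T \<le> span_weight w T'"
    using obtain_min_weight_triangle[OF less.prems(1), where w = w] by blast
  define R where "R = S - T"
  define k where "k = card R"
  have fin: "finite R" "finite T"
    using less.prems(1) T(1) R_def finite_subset by auto
  have card_S: "card S = k + 3"
    using fin(2) T less.prems(2) unfolding k_def R_def by (simp add: card_Diff_subset)
  have "S = R \<union> T" "R \<inter> T = {}"
    using T(1) unfolding R_def by auto
  then have split: "span_weight w S =
      span_weight w R + (\<Sum>y\<in>R. \<Sum>x\<in>T. edge_weight w y x) + span_weight w T"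
    using span_weight_Un[of R T w] fin by (simp add: ac_simps)
  have link_ge_triangle: "span_weight w T \<le> (\<Sum>x\<in>T. edge_weight w y x)"
    and link_ge_deficit: "3 - span_weight w T \<le> (\<Sum>x\<in>T. edge_weight w y x)" if "y \<in> R" for y
  proof -
    have y: "y \<in> S" "y \<notin> T"
      using that R_def by auto
    show "span_weight w T \<le> (\<Sum>x\<in>T. edge_weight w y x)"
      using T y by (intro triangle_le_link_weight T_min) (auto simp: card_insert_if fin)
    have "3 \<le> span_weight w (insert y T)"
      using T y fin by (intro less.prems(3)) auto
    then show "3 - span_weight w T \<le> (\<Sum>x\<in>T. edge_weight w y x)"
      using y fin by (simp add: span_weight_insert edge_weight_commute)
  qed
  have "(k + 3) * (k + 1) \<le> 3 * span_weight w S"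
    unfolding split
  proof (rule lower_bound_step)
    show "1 \<le> k"
      using card_S less.prems(2) by linarith
    show "k * span_weight w T \<le> (\<Sum>y\<in>R. \<Sum>x\<in>T. edge_weight w y x)"
      using sum_bounded_below[OF link_ge_triangle] unfolding k_def by simp
    show "k * (3 - span_weight w T) \<le> (\<Sum>y\<in>R. \<Sum>x\<in>T. edge_weight w y x)"
      using sum_bounded_below[OF link_ge_deficit] unfolding k_def by simp
    show "k * (k - 2) \<le> 3 * span_weight w R" if "4 \<le> k"
      using less.hyps[of R] less.prems fin that card_S unfolding k_def R_def by auto
    show "span_weight w T \<le> span_weight w R" if "k = 3"
      using T_min[of R] that unfolding k_def R_def by auto
  qed
  then show ?case
    using card_S by simp
qed

definition two_cliques :: "nat set \<Rightarrow> nat \<Rightarrow> nat \<Rightarrow> nat" where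
  "two_cliques A i j = (if i \<in> A \<and> j \<in> A then 2 else if i \<notin> A \<and> j \<notin> A then 1 else 0)"

lemma edge_weight_two_cliques:
  "x \<noteq> y \<Longrightarrow> edge_weight (two_cliques A) x y = two_cliques A x y"
  unfolding edge_weight_def two_cliques_def by auto

lemma span_weight_two_cliques:
  assumes "finite S"
  shows "span_weight (two_cliques A) S = 2 * (card (S \<inter> A) choose 2) + (card (S - A) choose 2)"
proof -
  have "span_weight (two_cliques A) S = span_weight (two_cliques A) ((S \<inter> A) \<union> (S - A))"
    by (simp add: Int_Diff_Un)
  also have "\<dots> = span_weight (two_cliques A) (S \<inter> A) + span_weight (two_cliques A) (S - A)
      + (\<Sum>x\<in>S \<inter> A. \<Sum>y\<in>S - A. edge_weight (two_cliques A) x y)"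
    using assms by (intro span_weight_Un) auto
  moreover have "span_weight (two_cliques A) (S \<inter> A) = 2 * (card (S \<inter> A) choose 2)"
    using assms by (intro span_weight_const) (auto simp: edge_weight_two_cliques two_cliques_def)
  moreover have "span_weight (two_cliques A) (S - A) = card (S - A) choose 2"
    using assms by (subst span_weight_const[where c = 1]) (auto simp: edge_weight_two_cliques two_cliques_def)
  moreover have "(\<Sum>x\<in>S \<inter> A. \<Sum>y\<in>S - A. edge_weight (two_cliques A) x y) = 0"
    by (intro sum.neutral ballI) (auto simp: edge_weight_def two_cliques_def)
  ultimately show ?thesis
    by simp
qed

lemma choose_two_sum_ge_3:
  assumes "4 \<le> k + l"
  shows "3 \<le> 2 * (k choose 2) + (l choose 2)"
proof -
  have two: "2 choose 2 = 1" and three: "3 choose 2 = 3"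
    by (simp_all add: choose_two)
  consider "3 \<le> l" | "k = 2" "2 \<le> l" | "3 \<le> k"
    using assms by linarith
  then show ?thesis
  proof cases
    case 1
    then show ?thesis
      using binomial_right_mono[of 3 l 2] three by linarith
  next
    case 2
    then show ?thesis
      using binomial_right_mono[of 2 l 2] two by simp
  next
    case 3
    then show ?thesis
      using binomial_right_mono[of 3 k 2] three by linarith
  qed
qed

lemma two_cliques_in_Phi: "two_cliques A \<in> Phi n"
  unfolding Phi_def
proof (intro CollectI allI impI, elim conjE)
  fix S assume S: "S \<subseteq> {..<n}" "4 \<le> card S"
  then have "finite S" by (meson finite_lessThan finite_subset)
  then have "card (S \<inter> A) + card (S - A) = card S"
    by (metis Int_Diff_Un Int_Diff_disjoint card_Un_disjoint finite_Diff finite_Int)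
  then show "3 \<le> span_weight (two_cliques A) S"
    using S(2) \<open>finite S\<close> by (simp add: span_weight_two_cliques choose_two_sum_ge_3)
qed

lemma double_choose_two: "2 * (m choose 2) = m * (m - 1)"
proof -
  have "even (m * (m - 1))"
    by (cases "even m") auto
  then show ?thesis
    by (simp add: choose_two)
qed

text \<open>With \<open>b\<close> vertices in the heavy clique, \<open>6 w - 2 n (n - 2) = (n - 3 b) (n - 3 b + 1)\<close>,
  which is at most 2 when \<open>|n - 3 b| \<le> 1\<close>.\<close>

lemma two_cliques_weight_le:
  assumes "2 \<le> n"
  shows "3 * span_weight (two_cliques {..<(n + 1) div 3}) {..<n} \<le> n * (n - 2) + 2"
proof -
  define b where "b = (n + 1) div 3"
  have "b \<le> n" unfolding b_def by simp
  then have "{..<n} \<inter> {..<b} = {..<b}" "{..<n} - {..<b} = {b..<n}" by auto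
  then have "6 * span_weight (two_cliques {..<b}) {..<n} = 6 * (b * (b - 1)) + 3 * ((n - b) * (n - b - 1))"
    by (simp add: span_weight_two_cliques double_choose_two flip: mult.assoc)
  moreover have "\<exists>j. b = j + 1 \<and> (n = 3 * j + 2 \<or> n = 3 * j + 3 \<or> n = 3 * j + 4)"
    unfolding b_def using assms by presburger
  ultimately show ?thesis
    unfolding b_def[symmetric] by (auto simp: algebra_simps)
qed

lemma ceiling_divide_3_eq:
  fixes a p :: int
  assumes "a \<le> 3 * p" "3 * p \<le> a + 2"
  shows "\<lceil>real_of_int a / 3\<rceil> = p"
  using assms by (intro ceiling_unique) linarith+

theorem theorem7p5:
  fixes n :: nat
  assumes "n \<ge> 4"
  shows "int (phi n) = \<lceil>real n * (real n - 2) / 3\<rceil>"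
proof -
  let ?w\<^sub>0 = "two_cliques {..<(n + 1) div 3}"
  have "?w\<^sub>0 \<in> Phi n"
    by (rule two_cliques_in_Phi)
  then have "phi n \<le> span_weight ?w\<^sub>0 {..<n}"
    unfolding phi_def by (intro cInf_lower) auto
  then have upper: "3 * phi n \<le> n * (n - 2) + 2"
    using two_cliques_weight_le[of n] assms by linarith
  have "phi n \<in> {span_weight w {..<n} | w. w \<in> Phi n}"
    unfolding phi_def using \<open>?w\<^sub>0 \<in> Phi n\<close> by (intro Inf_nat_def1) blast
  then obtain w where "w \<in> Phi n" "phi n = span_weight w {..<n}"
    by blast
  then have lower: "n * (n - 2) \<le> 3 * phi n"
    using span_weight_lower_bound[of "{..<n}" w] assms unfolding Phi_def by auto
  have n_int: "int (n * (n - 2)) = int n * (int n - 2)"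
    using assms by (simp add: of_nat_diff)
  have "int n * (int n - 2) \<le> 3 * int (phi n)" "3 * int (phi n) \<le> int n * (int n - 2) + 2"
    using lower upper unfolding n_int[symmetric] by linarith+
  then show ?thesis
    using ceiling_divide_3_eq[of "int n * (int n - 2)" "int (phi n)"] by simp
qed

end
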